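(* Let $G=(V,E)$ be a graph with no isolated vertices and $m\ge1$ edges. Then the linear programs $\mathrm{LP}_{\mathrm{complete}}$ and $\mathrm{LP}_{\mathrm{sparse}}$ (defined in the context) have the same set of optimal solutions; in particular every optimal solution of $\mathrm{LP}_{\mathrm{sparse}}$ is feasible for $\mathrm{LP}_{\mathrm{complete}}$, i.e. is a pseudo-metric on $V$ with values in $[0,1]$, and the two programs have the same optimal objective value.
   Context: $G=(V,E)$ is an undirected simple graph, $V=\{1,\dots,n\}$, $m=|E|$, adjacency matrix $A$, degrees $d_i$, modularity matrix $B_{i,j}=A_{i,j}-\frac{d_id_j}{2m}$. Variables $d_{i,j}$ satisfy $d_{i,j}=d_{j,i}$, $d_{i,i}=0$. $N(i)$ is the neighbor set of $i$ and $N(i,j)=(N(i)\cup N(j))\setminus\{i,j\}$. A pseudo-metric is a function $d$ on $V\times V$ with $d(i,j)\ge0$, $d(i,i)=0$, $d(i,j)=d(j,i)$ and $d(i,j)\le d(i,k)+d(k,j)$. $\mathrm{LP}_{\mathrm{complete}}$: maximize $\frac{1}{2m}\sum_{i,j}B_{i,j}(1-d_{i,j})$ (sum over all ordered pairs) subject to the triangle inequalities $d_{i,j}+d_{j,k}\ge d_{i,k}$, $d_{i,j}+d_{i,k}\ge d_{j,k}$, $d_{j,k}+d_{i,k}\ge d_{i,j}$ for all $i<j<k$, and $d_{i,j}\in[0,1]$ for all $i\ne j$. $\mathrm{LP}_{\mathrm{sparse}}$: maximize $-\frac{1}{2m}\sum_{i,j}B_{i,j}d_{i,j}$ subject to $d_{i,k}+d_{k,j}\ge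 d_{i,j}$ for every pair $i\ne j$ and every $k\in N(i,j)$, and $d_{i,j}\in[0,1]$ for all $i\ne j$. (Since $\sum_{i,j}B_{i,j}=0$, the two objectives coincide on every vector $d$.) *)

theory Defs
  imports Main "HOL-Analysis.Analysis"
begin

definition simple_graph :: "nat \<Rightarrow> (nat \<Rightarrow> nat \<Rightarrow> bool) \<Rightarrow> bool" where
  "simple_graph n adj \<longleftrightarrow>
     (\<forall>i j. adj i j \<longrightarrow> i \<in> {1..n} \<and> j \<in> {1..n}) \<and>
     (\<forall>i j. adj i j \<longleftrightarrow> adj j i) \<and> (\<forall>i. \<not> adj i i)"

definition Amat :: "(nat \<Rightarrow> nat \<Rightarrow> bool) \<Rightarrow> nat \<Rightarrow> nat \<Rightarrow> real" where
  "Amat adj i j = (if adj i j then 1 else 0)"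

definition nbrs :: "nat \<Rightarrow> (nat \<Rightarrow> nat \<Rightarrow> bool) \<Rightarrow> nat \<Rightarrow> nat set" where
  "nbrs n adj i = {j \<in> {1..n}. adj i j}"

definition deg :: "nat \<Rightarrow> (nat \<Rightarrow> nat \<Rightarrow> bool) \<Rightarrow> nat \<Rightarrow> real" where
  "deg n adj i = real (card (nbrs n adj i))"

definition num_edges :: "nat \<Rightarrow> (nat \<Rightarrow> nat \<Rightarrow> bool) \<Rightarrow> nat" where
  "num_edges n adj = card {(i, j). i \<in> {1..n} \<and> j \<in> {1..n} \<and> i < j \<and> adj i j}"

definition Bmat :: "nat \<Rightarrow> (nat \<Rightarrow> nat \<Rightarrow> bool) \<Rightarrow> nat \<Rightarrow> nat \<Rightarrow> real" where
  "Bmat n adj i j = Amat adj i j - deg n adj i * deg n adj j / (2 * real (num_edges n adj))"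

definition nbrs2 :: "nat \<Rightarrow> (nat \<Rightarrow> nat \<Rightarrow> bool) \<Rightarrow> nat \<Rightarrow> nat \<Rightarrow> nat set" where
  "nbrs2 n adj i j = (nbrs n adj i \<union> nbrs n adj j) - {i, j}"

text \<open>Variable vectors: d :: nat => nat => real, with d i j = d j i, d i i = 0,
  and (to avoid junk coordinates) d i j = 0 whenever i or j lies outside V.\<close>
definition is_var :: "nat \<Rightarrow> (nat \<Rightarrow> nat \<Rightarrow> real) \<Rightarrow> bool" where
  "is_var n d \<longleftrightarrow> (\<forall>i j. d i j = d j i) \<and> (\<forall>i. d i i = 0) \<and>
     (\<forall>i j. i \<notin> {1..n} \<or> j \<notin> {1..n} \<longrightarrow> d i j = 0)"

definition obj_complete :: "nat \<Rightarrow> (nat \<Rightarrow> nat \<Rightarrow> bool) \<Rightarrow> (nat \<Rightarrow> nat \<Rightarrow> real) \<Rightarrow> real" where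
  "obj_complete n adj d =
     (1 / (2 * real (num_edges n adj))) *
       (\<Sum>i\<in>{1..n}. \<Sum>j\<in>{1..n}. Bmat n adj i j * (1 - d i j))"

definition obj_sparse :: "nat \<Rightarrow> (nat \<Rightarrow> nat \<Rightarrow> bool) \<Rightarrow> (nat \<Rightarrow> nat \<Rightarrow> real) \<Rightarrow> real" where
  "obj_sparse n adj d =
     - (1 / (2 * real (num_edges n adj))) *
       (\<Sum>i\<in>{1..n}. \<Sum>j\<in>{1..n}. Bmat n adj i j * d i j)"

definition feasible_complete :: "nat \<Rightarrow> (nat \<Rightarrow> nat \<Rightarrow> real) \<Rightarrow> bool" where
  "feasible_complete n d \<longleftrightarrow> is_var n d \<and>
     (\<forall>i\<in>{1..n}. \<forall>j\<in>{1..n}. \<forall>k\<in>{1..n}. i < j \<and> j < k \<longrightarrow>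
        d i j + d j k \<ge> d i k \<and> d i j + d i k \<ge> d j k \<and> d j k + d i k \<ge> d i j) \<and>
     (\<forall>i\<in>{1..n}. \<forall>j\<in>{1..n}. i \<noteq> j \<longrightarrow> 0 \<le> d i j \<and> d i j \<le> 1)"

definition feasible_sparse :: "nat \<Rightarrow> (nat \<Rightarrow> nat \<Rightarrow> bool) \<Rightarrow> (nat \<Rightarrow> nat \<Rightarrow> real) \<Rightarrow> bool" where
  "feasible_sparse n adj d \<longleftrightarrow> is_var n d \<and>
     (\<forall>i\<in>{1..n}. \<forall>j\<in>{1..n}. i \<noteq> j \<longrightarrow>
        (\<forall>k\<in>nbrs2 n adj i j. d i k + d k j \<ge> d i j)) \<and>
     (\<forall>i\<in>{1..n}. \<forall>j\<in>{1..n}. i \<noteq> j \<longrightarrow> 0 \<le> d i j \<and> d i j \<le> 1)"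

definition optimal_complete :: "nat \<Rightarrow> (nat \<Rightarrow> nat \<Rightarrow> bool) \<Rightarrow> (nat \<Rightarrow> nat \<Rightarrow> real) \<Rightarrow> bool" where
  "optimal_complete n adj d \<longleftrightarrow> feasible_complete n d \<and>
     (\<forall>d'. feasible_complete n d' \<longrightarrow> obj_complete n adj d' \<le> obj_complete n adj d)"

definition optimal_sparse :: "nat \<Rightarrow> (nat \<Rightarrow> nat \<Rightarrow> bool) \<Rightarrow> (nat \<Rightarrow> nat \<Rightarrow> real) \<Rightarrow> bool" where
  "optimal_sparse n adj d \<longleftrightarrow> feasible_sparse n adj d \<and>
     (\<forall>d'. feasible_sparse n adj d' \<longrightarrow> obj_sparse n adj d' \<le> obj_sparse n adj d)"

definition pseudo_metric_on :: "nat set \<Rightarrow> (nat \<Rightarrow> nat \<Rightarrow> real) \<Rightarrow> bool" where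
  "pseudo_metric_on V d \<longleftrightarrow>
     (\<forall>i\<in>V. \<forall>j\<in>V. 0 \<le> d i j \<and> d i j = d j i) \<and> (\<forall>i\<in>V. d i i = 0) \<and>
     (\<forall>i\<in>V. \<forall>j\<in>V. \<forall>k\<in>V. d i j \<le> d i k + d k j)"

end

theory Submission imports Defs begin

(*
  Every complete-feasible vector (a [0,1]-bounded pseudo-metric on V) is sparse-feasible, and
  on every vector the two objectives coincide because the modularity matrix sums to zero.
  Conversely, a sparse-feasible d is replaced by its metric closure D: the length of a shortest
  walk in G with edge weights d, capped at 1.  D is complete-feasible, agrees with d on the
  edges, and dominates d on V x V, since the sparse triangle inequalities bound d(i,j) by the
  length of any walk from i to j.  As B(i,j) < 0 for every non-edge (no isolated vertices),
  passing from d to D never decreases the objective, and strictly increases it unless D = d.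
  An abstract lemma about maximisers over nested feasible sets then shows that both programs
  have the same maximisers; compactness of the complete-feasible set supplies one, and hence
  the two suprema agree.
*)


inductive walk :: "(nat \<Rightarrow> nat \<Rightarrow> bool) \<Rightarrow> (nat \<Rightarrow> nat \<Rightarrow> real) \<Rightarrow> nat \<Rightarrow> nat \<Rightarrow> real \<Rightarrow> bool"
  for adj d where
  walk_nil: "walk adj d i i 0"
| walk_cons: "adj i k \<Longrightarrow> walk adj d k j w \<Longrightarrow> walk adj d i j (d i k + w)"

lemma walk_nonneg: "walk adj d i j w \<Longrightarrow> (\<And>a b. 0 \<le> d a b) \<Longrightarrow> 0 \<le> w"
  by (induction rule: walk.induct) (auto intro: add_nonneg_nonneg)

lemma walk_snoc: "walk adj d i k w \<Longrightarrow> adj k j \<Longrightarrow> walk adj d i j (w + d k j)"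
proof (induction rule: walk.induct)
  case (walk_nil i)
  then show ?case using walk.walk_cons[of adj i j d j 0] walk.walk_nil[of adj d j] by simp
next
  case (walk_cons i k j' w)
  then show ?case by (metis add.assoc walk.walk_cons)
qed

lemma walk_append: "walk adj d i k a \<Longrightarrow> walk adj d k j b \<Longrightarrow> walk adj d i j (a + b)"
proof (induction arbitrary: b rule: walk.induct)
  case (walk_cons i k' k w)
  then show ?case by (metis add.assoc walk.walk_cons)
qed simp

lemma walk_rev:
  assumes "\<And>a b. adj a b = adj b a" and "\<And>a b. d a b = d b a"
  shows "walk adj d i j w \<Longrightarrow> walk adj d j i w"
proof (induction rule: walk.induct)
  case (walk_cons i k j w)
  then have "walk adj d j i (w + d k i)" using assms(1) walk_snoc by metis
  then show ?case using assms(2) by (simp add: add.commute)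
qed (rule walk_nil)


lemma le_cInf_add:
  fixes c :: real
  assumes "A \<noteq> {}" and "B \<noteq> {}" and "\<And>a b. a \<in> A \<Longrightarrow> b \<in> B \<Longrightarrow> c \<le> a + b"
  shows "c \<le> Inf A + Inf B"
proof -
  have "c - a \<le> Inf B" if "a \<in> A" for a
    using assms(2,3) that by (intro cInf_greatest) force+
  then have "c - Inf B \<le> Inf A"
    using assms(1) by (intro cInf_greatest) force+
  then show ?thesis by simp
qed

definition walk_closure :: "(nat \<Rightarrow> nat \<Rightarrow> bool) \<Rightarrow> (nat \<Rightarrow> nat \<Rightarrow> real) \<Rightarrow> nat \<Rightarrow> nat \<Rightarrow> real" where
  "walk_closure adj d i j = Inf (insert 1 {w. walk adj d i j w})"

context
  fixes adj :: "nat \<Rightarrow> nat \<Rightarrow> bool" and d :: "nat \<Rightarrow> nat \<Rightarrow> real"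
  assumes weights_nonneg: "\<And>a b. 0 \<le> d a b"
begin

lemma walk_weights_bdd_below: "bdd_below (insert 1 {w. walk adj d i j w})"
  using walk_nonneg weights_nonneg by (intro bdd_belowI[of _ 0]) auto

lemma walk_closure_nonneg: "0 \<le> walk_closure adj d i j"
  unfolding walk_closure_def using walk_nonneg weights_nonneg by (intro cInf_greatest) auto

lemma walk_closure_le_1: "walk_closure adj d i j \<le> 1"
  unfolding walk_closure_def by (rule cInf_lower[OF _ walk_weights_bdd_below]) simp

lemma walk_closure_le_walk: "walk adj d i j w \<Longrightarrow> walk_closure adj d i j \<le> w"
  unfolding walk_closure_def by (rule cInf_lower[OF _ walk_weights_bdd_below]) simp

lemma walk_closure_refl: "walk_closure adj d i i = 0"
  using walk_closure_le_walk[OF walk_nil] walk_closure_nonneg by (simp add: order_antisym)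

lemma walk_closure_le_edge: "adj i j \<Longrightarrow> walk_closure adj d i j \<le> d i j"
  using walk_closure_le_walk[OF walk_cons[OF _ walk_nil]] by simp

lemma walk_closure_sym:
  assumes "\<And>a b. adj a b = adj b a" and "\<And>a b. d a b = d b a"
  shows "walk_closure adj d i j = walk_closure adj d j i"
proof -
  have "{w. walk adj d i j w} = {w. walk adj d j i w}"
    using walk_rev[of adj d, OF assms] by blast
  then show ?thesis unfolding walk_closure_def by simp
qed

lemma walk_closure_triangle:
  "walk_closure adj d i j \<le> walk_closure adj d i k + walk_closure adj d k j"
  unfolding walk_closure_def[of adj d i k] walk_closure_def[of adj d k j]
proof (rule le_cInf_add)
  fix a b assume a: "a \<in> insert 1 {w. walk adj d i k w}" and b: "b \<in> insert 1 {w. walk adj d k j w}"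
  have "0 \<le> a" "0 \<le> b" using a b walk_nonneg weights_nonneg by auto
  show "walk_closure adj d i j \<le> a + b"
  proof (cases "a = 1 \<or> b = 1")
    case True
    then show ?thesis using walk_closure_le_1[of i j] \<open>0 \<le> a\<close> \<open>0 \<le> b\<close> by auto
  next
    case False
    then have "walk adj d i j (a + b)" using a b walk_append by auto
    then show ?thesis by (rule walk_closure_le_walk)
  qed
qed auto

end


lemma feasible_complete_iff:
  "feasible_complete n d \<longleftrightarrow>
     is_var n d \<and> pseudo_metric_on {1..n} d \<and> (\<forall>i\<in>{1..n}. \<forall>j\<in>{1..n}. d i j \<le> 1)"
proof
  assume f: "feasible_complete n d"
  have var: "is_var n d" using f by (simp add: feasible_complete_def)
  then have sym: "d a b = d b a" and diag: "d a a = 0" for a b by (simp_all add: is_var_def)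
  have nonneg: "0 \<le> d a b" for a b
    using f unfolding feasible_complete_def is_var_def by (metis order_refl)
  have sorted_triangles: "d a b + d b c \<ge> d a c \<and> d a b + d a c \<ge> d b c \<and> d b c + d a c \<ge> d a b"
    if "a \<in> {1..n}" "b \<in> {1..n}" "c \<in> {1..n}" "a < b" "b < c" for a b c
    using f that unfolding feasible_complete_def by blast
  have "d i j \<le> d i k + d k j" if "i \<in> {1..n}" "j \<in> {1..n}" "k \<in> {1..n}" for i j k
  proof (cases "i = j \<or> i = k \<or> j = k")
    case True
    then show ?thesis using diag nonneg[of i k] nonneg[of k j] by auto
  next
    case False
    then consider "i < j" "j < k" | "i < k" "k < j" | "j < i" "i < k"
      | "j < k" "k < i" | "k < i" "i < j" | "k < j" "j < i"
      by linarith
    then show ?thesis using that sym[of j i] sym[of k j] sym[of k i]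
      by cases (use sorted_triangles[of i j k] sorted_triangles[of i k j] sorted_triangles[of j i k]
          sorted_triangles[of j k i] sorted_triangles[of k i j] sorted_triangles[of k j i] in linarith)+
  qed
  then have "pseudo_metric_on {1..n} d"
    unfolding pseudo_metric_on_def using nonneg sym diag by blast
  moreover have "d i j \<le> 1" if "i \<in> {1..n}" "j \<in> {1..n}" for i j
    using f that diag[of i] unfolding feasible_complete_def by (cases "i = j") auto
  ultimately show "is_var n d \<and> pseudo_metric_on {1..n} d \<and> (\<forall>i\<in>{1..n}. \<forall>j\<in>{1..n}. d i j \<le> 1)"
    using var by blast
next
  assume "is_var n d \<and> pseudo_metric_on {1..n} d \<and> (\<forall>i\<in>{1..n}. \<forall>j\<in>{1..n}. d i j \<le> 1)"
  then show "feasible_complete n d"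
    unfolding feasible_complete_def pseudo_metric_on_def by metis
qed

(* The sparse program only imposes some of the triangle inequalities of the complete one. *)
lemma feasible_complete_imp_sparse: "feasible_complete n d \<Longrightarrow> feasible_sparse n adj d"
  unfolding feasible_sparse_def feasible_complete_iff pseudo_metric_on_def nbrs2_def nbrs_def
  by auto

lemma feasible_sparse_nonneg: "feasible_sparse n adj d \<Longrightarrow> 0 \<le> d a b"
  unfolding feasible_sparse_def is_var_def by (metis order_refl)

(* The sparse triangle inequalities, chained along a walk, bound d(i,j) by the weight of any
   walk from i to j. *)
lemma feasible_sparse_le_walk:
  assumes g: "simple_graph n adj" and f: "feasible_sparse n adj d"
  shows "walk adj d i j w \<Longrightarrow> d i j \<le> w"
proof (induction rule: walk.induct)
  case (walk_nil i)
  then show ?case using f by (simp add: feasible_sparse_def is_var_def)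
next
  case (walk_cons i k j w)
  have "0 \<le> w" using walk_nonneg[OF walk_cons(2)] feasible_sparse_nonneg[OF f] by blast
  show ?case
  proof (cases "i = j \<or> k = j \<or> j \<notin> {1..n}")
    case True
    then show ?thesis using f feasible_sparse_nonneg[OF f, of i k] \<open>0 \<le> w\<close>
      by (auto simp: feasible_sparse_def is_var_def)
  next
    case False
    have "i \<in> {1..n}" "k \<in> {1..n}" "k \<noteq> i"
      using g walk_cons(1) unfolding simple_graph_def by metis+
    then have "k \<in> nbrs2 n adj i j" using False walk_cons(1) by (auto simp: nbrs2_def nbrs_def)
    then have "d i j \<le> d i k + d k j"
      using f False \<open>i \<in> {1..n}\<close> \<open>k \<noteq> i\<close> unfolding feasible_sparse_def by blast
    then show ?thesis using walk_cons(3) by simp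
  qed
qed

definition metric_closure :: "nat \<Rightarrow> (nat \<Rightarrow> nat \<Rightarrow> bool) \<Rightarrow> (nat \<Rightarrow> nat \<Rightarrow> real) \<Rightarrow> nat \<Rightarrow> nat \<Rightarrow> real" where
  "metric_closure n adj d i j = (if i \<in> {1..n} \<and> j \<in> {1..n} then walk_closure adj d i j else 0)"

lemma metric_closure_properties:
  assumes g: "simple_graph n adj" and f: "feasible_sparse n adj d"
  defines "D \<equiv> metric_closure n adj d"
  shows "feasible_complete n D" and "\<And>i j. adj i j \<Longrightarrow> D i j = d i j"
    and "\<And>i j. i \<in> {1..n} \<Longrightarrow> j \<in> {1..n} \<Longrightarrow> d i j \<le> D i j"
proof -
  note nonneg = feasible_sparse_nonneg[OF f]
  have adj_sym: "\<And>a b. adj a b = adj b a" using g by (simp add: simple_graph_def)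
  have d_sym: "\<And>a b. d a b = d b a" using f by (simp add: feasible_sparse_def is_var_def)
  note sym = walk_closure_sym[where adj = adj and d = d, OF nonneg adj_sym d_sym]
  have "pseudo_metric_on {1..n} D"
    unfolding pseudo_metric_on_def D_def metric_closure_def
    using walk_closure_nonneg[where adj = adj and d = d, OF nonneg] walk_closure_refl[where adj = adj and d = d, OF nonneg] sym
      walk_closure_triangle[where adj = adj and d = d, OF nonneg] by simp
  moreover have "is_var n D"
    unfolding is_var_def D_def metric_closure_def using walk_closure_refl[where adj = adj and d = d, OF nonneg] sym by auto
  moreover have "\<forall>i\<in>{1..n}. \<forall>j\<in>{1..n}. D i j \<le> 1"
    unfolding D_def metric_closure_def using walk_closure_le_1[where adj = adj and d = d, OF nonneg] by auto
  ultimately show "feasible_complete n D" by (simp add: feasible_complete_iff)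
  show dominates: "d i j \<le> D i j" if "i \<in> {1..n}" "j \<in> {1..n}" for i j
  proof -
    have "d i j \<le> Inf (insert 1 {w. walk adj d i j w})"
    proof (rule cInf_greatest)
      fix x assume "x \<in> insert 1 {w. walk adj d i j w}"
      moreover have "d i j \<le> 1"
        using f that unfolding feasible_sparse_def is_var_def by (cases "i = j") auto
      ultimately show "d i j \<le> x" using feasible_sparse_le_walk[OF g f] by auto
    qed simp
    then show ?thesis using that by (simp add: D_def metric_closure_def walk_closure_def)
  qed
  show "D i j = d i j" if "adj i j" for i j
  proof -
    have "i \<in> {1..n}" "j \<in> {1..n}" using g that unfolding simple_graph_def by metis+
    then show ?thesis using walk_closure_le_edge[where adj = adj and d = d, OF nonneg that] dominates
      by (simp add: D_def metric_closure_def order_antisym)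
  qed
qed


lemma sum_deg:
  assumes g: "simple_graph n adj"
  shows "(\<Sum>i\<in>{1..n}. deg n adj i) = 2 * real (num_edges n adj)"
proof -
  define P where "P = Sigma {1..n} (nbrs n adj)"
  define U where "U = {(i, j). i \<in> {1..n} \<and> j \<in> {1..n} \<and> i < j \<and> adj i j}"
  have card_P: "card P = (\<Sum>i\<in>{1..n}. card (nbrs n adj i))"
    unfolding P_def by (rule card_SigmaI) (auto simp: nbrs_def)
  have P_split: "P = U \<union> prod.swap ` U"
  proof
    show "P \<subseteq> U \<union> prod.swap ` U"
    proof
      fix x assume "x \<in> P"
      then obtain i j where x: "x = (i, j)" "i \<in> {1..n}" "j \<in> {1..n}" "adj i j"
        unfolding P_def nbrs_def by auto
      have "i \<noteq> j" and "adj j i" using g x unfolding simple_graph_def by metis+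
      then have "(i, j) \<in> U \<or> (j, i) \<in> U" using x unfolding U_def by auto
      then show "x \<in> U \<union> prod.swap ` U" using x by force
    qed
    show "U \<union> prod.swap ` U \<subseteq> P"
      using g unfolding U_def P_def nbrs_def simple_graph_def by auto
  qed
  have "finite U" unfolding U_def by (rule finite_subset[of _ "{1..n} \<times> {1..n}"]) auto
  moreover have "U \<inter> prod.swap ` U = {}" unfolding U_def by auto
  ultimately have "card P = card U + card (prod.swap ` U)"
    unfolding P_split by (intro card_Un_disjoint) auto
  also have "card (prod.swap ` U) = card U" by (rule card_image) (simp add: inj_on_def prod_eq_iff)
  finally have "(\<Sum>i\<in>{1..n}. card (nbrs n adj i)) = 2 * num_edges n adj"
    using card_P unfolding U_def num_edges_def by simp
  then show ?thesis unfolding deg_def by (metis of_nat_sum of_nat_mult of_nat_numeral)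
qed

lemma sum_Bmat:
  assumes g: "simple_graph n adj" and m: "num_edges n adj \<ge> 1"
  shows "(\<Sum>i\<in>{1..n}. \<Sum>j\<in>{1..n}. Bmat n adj i j) = 0"
proof -
  define S where "S = (\<Sum>i\<in>{1..n}. deg n adj i)"
  have row_A: "(\<Sum>j\<in>{1..n}. Amat adj i j) = deg n adj i" for i
    unfolding Amat_def deg_def nbrs_def by (simp add: sum.If_cases Int_def conj_commute)
  have "(\<Sum>i\<in>{1..n}. \<Sum>j\<in>{1..n}. Bmat n adj i j) =
     (\<Sum>i\<in>{1..n}. deg n adj i - deg n adj i * S / (2 * real (num_edges n adj)))"
    unfolding Bmat_def sum_subtractf row_A S_def
    by (simp add: sum_divide_distrib[symmetric] sum_distrib_left)
  also have "\<dots> = S - S * S / (2 * real (num_edges n adj))"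
    unfolding S_def by (simp add: sum_subtractf sum_divide_distrib[symmetric] sum_distrib_right)
  finally show ?thesis using sum_deg[OF g] m unfolding S_def by simp
qed

lemma obj_complete_eq_sparse:
  assumes g: "simple_graph n adj" and m: "num_edges n adj \<ge> 1"
  shows "obj_complete n adj d = obj_sparse n adj d"
proof -
  have "(\<Sum>i\<in>{1..n}. \<Sum>j\<in>{1..n}. Bmat n adj i j * (1 - d i j)) =
      (\<Sum>i\<in>{1..n}. \<Sum>j\<in>{1..n}. Bmat n adj i j) - (\<Sum>i\<in>{1..n}. \<Sum>j\<in>{1..n}. Bmat n adj i j * d i j)"
    by (simp add: right_diff_distrib sum_subtractf)
  then show ?thesis unfolding obj_complete_def obj_sparse_def using sum_Bmat[OF g m] by simp
qed

(* Without isolated vertices every degree is positive, so B(i,j) < 0 for every non-edge. *)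
lemma Bmat_nonedge_neg:
  assumes g: "simple_graph n adj" and no_iso: "\<forall>i\<in>{1..n}. \<exists>j. adj i j"
    and m: "num_edges n adj \<ge> 1"
    and i: "i \<in> {1..n}" and j: "j \<in> {1..n}" and nonedge: "\<not> adj i j"
  shows "Bmat n adj i j < 0"
proof -
  have "0 < deg n adj v" if v: "v \<in> {1..n}" for v
  proof -
    obtain u where "adj v u" using no_iso v by blast
    then have "u \<in> nbrs n adj v" using g unfolding simple_graph_def nbrs_def by blast
    moreover have "finite (nbrs n adj v)" unfolding nbrs_def by simp
    ultimately show ?thesis unfolding deg_def by (auto simp: card_gt_0_iff)
  qed
  then have "0 < deg n adj i * deg n adj j / (2 * real (num_edges n adj))"
    using i j m by (intro divide_pos_pos mult_pos_pos) auto
  then show ?thesis using nonedge by (simp add: Bmat_def Amat_def)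
qed

lemma sum_nonpos_eq_0_iff:
  fixes t :: "'a \<Rightarrow> real"
  assumes "finite A" and "\<And>x. x \<in> A \<Longrightarrow> t x \<le> 0"
  shows "sum t A = 0 \<longleftrightarrow> (\<forall>x\<in>A. t x = 0)"
  using sum_nonneg_eq_0_iff[of A "\<lambda>x. - t x"] assms by (simp add: sum_negf)

lemma obj_sparse_increase:
  assumes g: "simple_graph n adj" and no_iso: "\<forall>i\<in>{1..n}. \<exists>j. adj i j"
    and m: "num_edges n adj \<ge> 1"
    and vars: "is_var n d" "is_var n D"
    and edges: "\<And>i j. adj i j \<Longrightarrow> D i j = d i j"
    and dominates: "\<And>i j. i \<in> {1..n} \<Longrightarrow> j \<in> {1..n} \<Longrightarrow> d i j \<le> D i j"
  shows "obj_sparse n adj d \<le> obj_sparse n adj D"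
    and "obj_sparse n adj d = obj_sparse n adj D \<Longrightarrow> D = d"
proof -
  define V2 where "V2 = {1..n} \<times> {1..n}"
  define t where "t = (\<lambda>(i, j). Bmat n adj i j * (D i j - d i j))"
  have m_pos: "0 < 2 * real (num_edges n adj)" using m by simp
  have diff: "obj_sparse n adj D - obj_sparse n adj d = - sum t V2 / (2 * real (num_edges n adj))"
    unfolding obj_sparse_def t_def V2_def sum.cartesian_product[symmetric]
    by (simp add: right_diff_distrib sum_subtractf diff_divide_distrib)
  have t_nonpos: "t p \<le> 0" if p_in: "p \<in> V2" for p
  proof -
    obtain i j where p: "p = (i, j)" "i \<in> {1..n}" "j \<in> {1..n}" using p_in V2_def by auto
    show ?thesis
    proof (cases "adj i j \<or> i = j")
      case True
      then show ?thesis using edges vars p by (auto simp: t_def is_var_def)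
    next
      case False
      then show ?thesis using Bmat_nonedge_neg[OF g no_iso m, of i j] dominates[of i j] p
        by (simp add: t_def mult_nonpos_nonneg)
    qed
  qed
  then have "sum t V2 \<le> 0" by (rule sum_nonpos)
  then have "0 \<le> - sum t V2 / (2 * real (num_edges n adj))"
    using m_pos by (simp add: divide_nonpos_pos)
  then show "obj_sparse n adj d \<le> obj_sparse n adj D" using diff by simp
  assume "obj_sparse n adj d = obj_sparse n adj D"
  then have "sum t V2 = 0" using diff m_pos by simp
  then have t_zero: "\<forall>p\<in>V2. t p = 0"
    using sum_nonpos_eq_0_iff[of V2 t] t_nonpos unfolding V2_def by simp
  show "D = d"
  proof (intro ext)
    fix i j
    show "D i j = d i j"
    proof (cases "i \<in> {1..n} \<and> j \<in> {1..n} \<and> \<not> adj i j")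
      case True
      then show ?thesis using Bmat_nonedge_neg[OF g no_iso m, of i j] t_zero
        unfolding t_def V2_def by force
    next
      case False
      then show ?thesis using vars edges by (auto simp: is_var_def)
    qed
  qed
qed


lemma is_arg_max_transfer:
  fixes f :: "'a \<Rightarrow> 'b :: linorder"
  assumes sub: "\<And>x. P x \<Longrightarrow> Q x"
    and improve: "\<And>x. Q x \<Longrightarrow> \<exists>y. P y \<and> f x \<le> f y \<and> (f x = f y \<longrightarrow> y = x)"
  shows "is_arg_max f P x \<longleftrightarrow> is_arg_max f Q x"
proof
  assume max: "is_arg_max f P x"
  have "f z \<le> f x" if "Q z" for z
    using improve[OF that] max order_trans unfolding is_arg_max_linorder by metis
  then show "is_arg_max f Q x" using max sub unfolding is_arg_max_linorder by blast
next
  assume max: "is_arg_max f Q x"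
  then obtain y where y: "P y" "f x \<le> f y" and eq: "f x = f y \<longrightarrow> y = x"
    using improve unfolding is_arg_max_linorder by blast
  have "f y \<le> f x" using max sub y(1) unfolding is_arg_max_linorder by blast
  then have "y = x" using eq order_antisym[OF y(2)] by simp
  then have "P x" using y(1) by simp
  then show "is_arg_max f P x" using max sub unfolding is_arg_max_linorder by blast
qed

lemma Sup_eq_is_arg_max:
  fixes f :: "'a \<Rightarrow> real"
  shows "is_arg_max f P x \<Longrightarrow> (SUP y\<in>{y. P y}. f y) = f x"
  unfolding is_arg_max_linorder by (intro cSup_eq_maximum) auto


(* The optimum of LP_complete is attained: its feasible set is a closed subset of the
   compact cube [0,1]^(nat x nat), and the objective is continuous. *)
lemma continuous_on_entry [continuous_intros]:
  "continuous_on S (\<lambda>d :: nat \<Rightarrow> nat \<Rightarrow> real. d i j)"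
  by (intro continuous_on_subset[OF continuous_on_product_then_coordinatewise
        [OF continuous_on_product_coordinates]]) simp

lemma compact_unit_cube: "compact {d :: nat \<Rightarrow> nat \<Rightarrow> real. \<forall>i j. d i j \<in> {0..1}}"
proof -
  have "compact (PiE UNIV (\<lambda>_ :: nat. {0..1 :: real}))"
    using compactin_PiE[of "\<lambda>_. euclidean" UNIV "\<lambda>_ :: nat. {0..1 :: real}"]
    by (simp add: euclidean_product_topology)
  then have "compact (PiE UNIV (\<lambda>_ :: nat. PiE UNIV (\<lambda>_ :: nat. {0..1 :: real})))"
    using compactin_PiE[of "\<lambda>_. euclidean" UNIV "\<lambda>_ :: nat. PiE UNIV (\<lambda>_ :: nat. {0..1 :: real})"]
    by (simp add: euclidean_product_topology)
  moreover have "PiE UNIV (\<lambda>_ :: nat. PiE UNIV (\<lambda>_ :: nat. {0..1 :: real})) =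
      {d. \<forall>i j. d i j \<in> {0..1}}"
    by (auto simp: PiE_UNIV_domain Pi_iff)
  ultimately show ?thesis by simp
qed

lemma closed_feasible_complete: "closed {d. feasible_complete n d}"
  unfolding feasible_complete_def is_var_def Ball_def
  by (intro closed_Collect_conj closed_Collect_all closed_Collect_imp open_Collect_const
      closed_Collect_le closed_Collect_eq continuous_intros)

lemma optimal_complete_exists: "\<exists>d. optimal_complete n adj d"
proof -
  define F where "F = {d. feasible_complete n d}"
  have "F \<subseteq> {d. \<forall>i j. d i j \<in> {0..1}}"
  proof (clarify)
    fix d i j assume "d \<in> F"
    then show "d i j \<in> {0..1}"
      unfolding F_def feasible_complete_def is_var_def
      by (cases "i \<in> {1..n} \<and> j \<in> {1..n}"; cases "i = j") auto
  qed
  then have "compact F"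
    using compact_Int_closed[OF compact_unit_cube closed_feasible_complete[of n]]
    by (simp add: F_def Int_absorb1)
  moreover have "(\<lambda>_ _. 0) \<in> F" by (simp add: F_def feasible_complete_def is_var_def)
  moreover have "continuous_on F (obj_complete n adj)"
    unfolding obj_complete_def by (intro continuous_intros)
  ultimately obtain x where "x \<in> F" "\<forall>y\<in>F. obj_complete n adj y \<le> obj_complete n adj x"
    using continuous_attains_sup by (metis empty_iff)
  then show ?thesis unfolding optimal_complete_def F_def by auto
qed


theorem theorem2:
  fixes n :: nat and adj :: "nat \<Rightarrow> nat \<Rightarrow> bool"
  assumes "simple_graph n adj"
    and "\<forall>i\<in>{1..n}. \<exists>j. adj i j"
    and "num_edges n adj \<ge> 1"
  shows "(\<forall>d. optimal_complete n adj d \<longleftrightarrow> optimal_sparse n adj d)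
    \<and> (\<forall>d. optimal_sparse n adj d \<longrightarrow>
          feasible_complete n d \<and> pseudo_metric_on {1..n} d \<and>
          (\<forall>i\<in>{1..n}. \<forall>j\<in>{1..n}. 0 \<le> d i j \<and> d i j \<le> 1))
    \<and> (\<exists>d. optimal_complete n adj d)
    \<and> (\<exists>d. optimal_sparse n adj d)
    \<and> (SUP d\<in>{d. feasible_complete n d}. obj_complete n adj d)
        = (SUP d\<in>{d. feasible_sparse n adj d}. obj_sparse n adj d)"
proof -
  note g = assms(1) and no_iso = assms(2) and m = assms(3)
  have obj: "obj_complete n adj = obj_sparse n adj"
    using obj_complete_eq_sparse[OF g m] by blast
  have opt_c: "optimal_complete n adj = is_arg_max (obj_sparse n adj) (feasible_complete n)"
    and opt_s: "optimal_sparse n adj = is_arg_max (obj_sparse n adj) (feasible_sparse n adj)"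
    unfolding optimal_complete_def optimal_sparse_def is_arg_max_linorder obj by auto
  have improve: "\<exists>D. feasible_complete n D \<and> obj_sparse n adj d \<le> obj_sparse n adj D \<and>
      (obj_sparse n adj d = obj_sparse n adj D \<longrightarrow> D = d)" if "feasible_sparse n adj d" for d
    using metric_closure_properties[OF g that] that
      obj_sparse_increase[OF g no_iso m, of d "metric_closure n adj d"]
    by (metis feasible_complete_def feasible_sparse_def)
  have same_opt: "optimal_complete n adj d \<longleftrightarrow> optimal_sparse n adj d" for d
    unfolding opt_c opt_s using feasible_complete_imp_sparse improve by (rule is_arg_max_transfer)
  obtain d0 where d0: "optimal_complete n adj d0" using optimal_complete_exists by blast
  have "feasible_complete n d \<and> pseudo_metric_on {1..n} d \<and>
      (\<forall>i\<in>{1..n}. \<forall>j\<in>{1..n}. 0 \<le> d i j \<and> d i j \<le> 1)" if "optimal_sparse n adj d" for d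
    using that same_opt[of d] unfolding optimal_complete_def feasible_complete_iff pseudo_metric_on_def
    by blast
  moreover have "(SUP d\<in>{d. feasible_complete n d}. obj_complete n adj d)
        = (SUP d\<in>{d. feasible_sparse n adj d}. obj_sparse n adj d)"
    using d0 same_opt[of d0] Sup_eq_is_arg_max unfolding opt_c opt_s obj by metis
  ultimately show ?thesis using same_opt d0 by blast
qed

end
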